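(* There exist a noisy discrete memoryless classical channel $N_n$ and a perfect $d$-level quantum channel $Q_p$ (for some $d\ge 1$) such that the one-shot zero-error classical capacity of the parallel use of $N_n$ and $Q_p$ strictly exceeds the product $\mathfrak{C}_0(N_n)\cdot \mathfrak{C}_0(Q_p)=\alpha(G(N_n))\cdot d$ of their individual one-shot zero-error classical capacities.
   Context: A discrete memoryless classical channel $N$ has a finite input alphabet $\mathcal{X}$, a finite output alphabet $\mathcal{Y}$ and conditional probabilities $P(y|x)$ with $\sum_{y}P(y|x)=1$ for each $x$. Let $\Gamma(x)=\{y: P(y|x)>0\}$. Distinct inputs $x,x'$ are confusable if $\Gamma(x)\cap\Gamma(x')\neq\varnothing$. The confusability graph $G(N)$ has vertex set $\mathcal{X}$, with an edge between distinct confusable inputs. The one-shot zero-error classical capacity of $N$ is $\mathfrak{C}_0(N)=\alpha(G(N))$, the independence number, i.e. the maximum number of messages that can be sent with zero error in one use (capacity is measured as a number of messages, not its logarithm). A perfect $d$-level quantum channel is the identity map on density operators on $\mathbb{C}^d$; its one-shot zero-error classical capacity is $d$. The one-shot zero-error classical capacity of the parallel (single, simultaneous) use of $N$ and a perfect $d$-level quantum channel is the largest integer $M$ for which there exist, for each message $m\in\{1,\dots,M\}$, a classical input $x_m\in\mathcal{X}$ and a quantum state $\rho_m$ on $\mathbb{C}^d$, and, for each output $y\in\mathcal{Y}$, a measurement (POVM) $\{E^{(y)}_{m'}\}_{m'=1}^M$ on $\mathbb{C}^d$, such that the receiver, seeing output $y$ of $N$ on input $x_m$ and measuring $\rho_m$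 with $\{E^{(y)}_{m'}\}$, obtains outcome $m$ with probability one, i.e. $\sum_{y}P(y|x_m)\,\mathrm{Tr}(E^{(y)}_{m}\rho_m)=1$ for every $m$. *)

theory Defs
  imports "Jordan_Normal_Form.Matrix"
begin

definition classical_channel :: "nat \<Rightarrow> nat \<Rightarrow> (nat \<Rightarrow> nat \<Rightarrow> real) \<Rightarrow> bool" where
  "classical_channel nx ny P \<longleftrightarrow> 0 < nx \<and> 0 < ny \<and>
     (\<forall>x<nx. \<forall>y<ny. 0 \<le> P x y) \<and> (\<forall>x<nx. (\<Sum>y<ny. P x y) = 1)"

definition confusable :: "nat \<Rightarrow> (nat \<Rightarrow> nat \<Rightarrow> real) \<Rightarrow> nat \<Rightarrow> nat \<Rightarrow> bool" where
  "confusable ny P x x' \<longleftrightarrow> x \<noteq> x' \<and> (\<exists>y<ny. 0 < P x y \<and> 0 < P x' y)"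

definition independent_set :: "nat \<Rightarrow> nat \<Rightarrow> (nat \<Rightarrow> nat \<Rightarrow> real) \<Rightarrow> nat set \<Rightarrow> bool" where
  "independent_set nx ny P S \<longleftrightarrow> S \<subseteq> {..<nx} \<and>
     (\<forall>x\<in>S. \<forall>x'\<in>S. \<not> confusable ny P x x')"

definition independence_number :: "nat \<Rightarrow> nat \<Rightarrow> (nat \<Rightarrow> nat \<Rightarrow> real) \<Rightarrow> nat" where
  "independence_number nx ny P = Max (card ` {S. independent_set nx ny P S})"

definition noisy_channel :: "nat \<Rightarrow> nat \<Rightarrow> (nat \<Rightarrow> nat \<Rightarrow> real) \<Rightarrow> bool" where
  "noisy_channel nx ny P \<longleftrightarrow> (\<exists>x<nx. \<exists>x'<nx. confusable ny P x x')"

definition mtrace :: "nat \<Rightarrow> complex mat \<Rightarrow> complex" where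
  "mtrace d A = (\<Sum>i<d. A $$ (i, i))"

definition psd :: "nat \<Rightarrow> complex mat \<Rightarrow> bool" where
  "psd d A \<longleftrightarrow> A \<in> carrier_mat d d \<and>
     (\<forall>v \<in> carrier_vec d. let q = (\<Sum>i<d. cnj (v $ i) * (A *\<^sub>v v) $ i)
                            in Im q = 0 \<and> 0 \<le> Re q)"

definition density_op :: "nat \<Rightarrow> complex mat \<Rightarrow> bool" where
  "density_op d \<rho> \<longleftrightarrow> psd d \<rho> \<and> mtrace d \<rho> = 1"

definition povm :: "nat \<Rightarrow> nat \<Rightarrow> (nat \<Rightarrow> complex mat) \<Rightarrow> bool" where
  "povm d M E \<longleftrightarrow> (\<forall>m<M. psd d (E m)) \<and>
     (\<forall>i<d. \<forall>j<d. (\<Sum>m<M. E m $$ (i, j)) = (1\<^sub>m d) $$ (i, j))"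

definition zero_error_code :: "nat \<Rightarrow> nat \<Rightarrow> (nat \<Rightarrow> nat \<Rightarrow> real) \<Rightarrow> nat \<Rightarrow> nat \<Rightarrow> bool" where
  "zero_error_code nx ny P d M \<longleftrightarrow>
     (\<exists>(x :: nat \<Rightarrow> nat) (\<rho> :: nat \<Rightarrow> complex mat) (E :: nat \<Rightarrow> nat \<Rightarrow> complex mat).
        (\<forall>m<M. x m < nx \<and> density_op d (\<rho> m)) \<and>
        (\<forall>y<ny. povm d M (E y)) \<and>
        (\<forall>m<M. (\<Sum>y<ny. complex_of_real (P (x m) y) * mtrace d (E y m * \<rho> m)) = 1))"

definition parallel_capacity :: "nat \<Rightarrow> nat \<Rightarrow> (nat \<Rightarrow> nat \<Rightarrow> real) \<Rightarrow> nat \<Rightarrow> nat" where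
  "parallel_capacity nx ny P d = (GREATEST M. zero_error_code nx ny P d M)"

text \<open>One-shot zero-error capacity of the perfect d-level quantum channel is d (given).\<close>

end

(* Kochen-Specker configurations separate the two capacities. Take real vectors u_1, ..., u_n
   in R^d and k orthogonal bases ("contexts") made of them, every vector lying in exactly r
   contexts, and let the classical channel map input x to a uniformly random context containing
   x. Two inputs are confusable iff they share a context, so an independent set meets each
   context at most once and double counting gives r * alpha <= k. With a perfect d-level quantum
   channel alongside, the sender transmits x together with the state |u_x><u_x|; the receiver
   reads off a context containing x from the classical output and measures in that basis, which
   returns x with certainty, so all n inputs are zero-error messages. The 18 vectors and 9 bases
   of R^4 of Cabello, Estebaranz and Garcia-Alcaine (r = 2) give 18 > 4 * 4 >= alpha * d. *)

theory Submission
  imports Defs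
begin

lemma sum_lessThan_single_support:
  assumes "i < d" "\<And>k. k < d \<Longrightarrow> k \<noteq> i \<Longrightarrow> f k = 0"
  shows "(\<Sum>k<d. f k) = f (i::nat)"
  by (rule sum.mono_neutral_right[where S = "{i}", simplified]) (use assms in auto)

lemma sum_lessThan_two_support:
  assumes "i < d" "j < d" "i \<noteq> j" "\<And>k. k < d \<Longrightarrow> k \<noteq> i \<Longrightarrow> k \<noteq> j \<Longrightarrow> f k = 0"
  shows "(\<Sum>k<d. f k) = f i + f (j::nat)"
proof -
  have "(\<Sum>k<d. f k) = (\<Sum>k\<in>{i,j}. f k)"
    by (rule sum.mono_neutral_right) (use assms in auto)
  then show ?thesis using assms by simp
qed

lemma psd_carrier: "psd d A \<Longrightarrow> A \<in> carrier_mat d d"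
  by (simp add: psd_def)

lemma psd_zero_mat: "psd d (0\<^sub>m d d)"
  by (simp add: psd_def scalar_prod_def)

lemma psd_quad_form:
  assumes "psd d A" "v \<in> carrier_vec d"
  shows "Im (\<Sum>i<d. cnj (v $ i) * (A *\<^sub>v v) $ i) = 0 \<and> 0 \<le> Re (\<Sum>i<d. cnj (v $ i) * (A *\<^sub>v v) $ i)"
  using assms unfolding psd_def Let_def by blast

lemma psd_diag_real_nonneg:
  assumes "psd d A" "i < d"
  shows "Im (A $$ (i,i)) = 0 \<and> 0 \<le> Re (A $$ (i,i))"
proof -
  define v :: "complex vec" where "v = unit_vec d i"
  have A: "A \<in> carrier_mat d d" using assms psd_carrier by blast
  have Av: "(A *\<^sub>v v) $ k = A $$ (k,i)" if "k < d" for k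
    using A that assms(2)
    by (simp add: scalar_prod_def v_def if_distrib[of "(*) _"] cong: if_cong)
  have "(\<Sum>k<d. cnj (v $ k) * (A *\<^sub>v v) $ k) = A $$ (i,i)"
    using assms(2) Av by (simp add: sum_lessThan_single_support[of i] v_def)
  then show ?thesis using psd_quad_form[OF assms(1), of v] by (simp add: v_def)
qed

lemma psd_quad_form_pair:
  assumes "psd d A" "i < d" "j < d" "i \<noteq> j"
  shows "Im (A $$ (i,i) + c * A $$ (i,j) + cnj c * A $$ (j,i) + cnj c * c * A $$ (j,j)) = 0 \<and>
         0 \<le> Re (A $$ (i,i) + c * A $$ (i,j) + cnj c * A $$ (j,i) + cnj c * c * A $$ (j,j))"
proof -
  define v where "v = vec d (\<lambda>k. if k = i then 1 else if k = j then c else 0)"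
  have A: "A \<in> carrier_mat d d" using assms psd_carrier by blast
  have Av: "(A *\<^sub>v v) $ k = A $$ (k,i) + A $$ (k,j) * c" if "k < d" for k
  proof -
    have "(A *\<^sub>v v) $ k = (\<Sum>l<d. A $$ (k,l) * v $ l)"
      using A that by (simp add: scalar_prod_def lessThan_atLeast0 v_def)
    also have "\<dots> = A $$ (k,i) + A $$ (k,j) * c"
      using assms(2-4) by (simp add: sum_lessThan_two_support[of i d j] v_def)
    finally show ?thesis .
  qed
  have "(\<Sum>k<d. cnj (v $ k) * (A *\<^sub>v v) $ k) = A $$ (i,i) + c * A $$ (i,j) + cnj c * A $$ (j,i) + cnj c * c * A $$ (j,j)"
    using assms Av by (simp add: sum_lessThan_two_support[of i d j] v_def algebra_simps)
  then show ?thesis using psd_quad_form[OF assms(1), of v] by (simp add: v_def)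
qed

lemma psd_entry_bound:
  assumes "psd d A" "i < d" "j < d"
  shows "cmod (A $$ (i,j)) \<le> Re (A $$ (i,i)) + Re (A $$ (j,j))"
proof (cases "i = j")
  case True
  then show ?thesis using psd_diag_real_nonneg[OF assms(1,2)] by (simp add: cmod_def)
next
  case False
  define s where "s = Re (A $$ (i,i)) + Re (A $$ (j,j))"
  note diag = psd_diag_real_nonneg[OF assms(1,2)] psd_diag_real_nonneg[OF assms(1,3)]
  have "0 \<le> s + Re (A $$ (i,j)) + Re (A $$ (j,i))" "Im (A $$ (i,j)) + Im (A $$ (j,i)) = 0"
    using psd_quad_form_pair[OF assms False, of 1] diag by (simp_all add: s_def)
  moreover have "0 \<le> s - Re (A $$ (i,j)) - Re (A $$ (j,i))"
    using psd_quad_form_pair[OF assms False, of "-1"] diag by (simp add: s_def)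
  moreover have "0 \<le> s - Im (A $$ (i,j)) + Im (A $$ (j,i))" "Re (A $$ (i,j)) = Re (A $$ (j,i))"
    using psd_quad_form_pair[OF assms False, of "\<i>"] diag by (simp_all add: s_def)
  moreover have "0 \<le> s + Im (A $$ (i,j)) - Im (A $$ (j,i))"
    using psd_quad_form_pair[OF assms False, of "-\<i>"] diag by (simp add: s_def)
  ultimately have "\<bar>Re (A $$ (i,j))\<bar> + \<bar>Im (A $$ (i,j))\<bar> \<le> s" by linarith
  then show ?thesis using cmod_le[of "A $$ (i,j)"] by (simp add: s_def)
qed

lemma density_op_entry_bound:
  assumes "density_op d \<rho>" "i < d" "j < d"
  shows "cmod (\<rho> $$ (i,j)) \<le> 2"
proof -
  have psd: "psd d \<rho>" and tr: "mtrace d \<rho> = 1" using assms(1) density_op_def by auto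
  have diag_le: "Re (\<rho> $$ (k,k)) \<le> 1" if "k < d" for k
  proof -
    have "Re (\<rho> $$ (k,k)) \<le> (\<Sum>l<d. Re (\<rho> $$ (l,l)))"
      by (rule member_le_sum) (use that psd_diag_real_nonneg[OF psd] in auto)
    also have "\<dots> = Re (mtrace d \<rho>)" by (simp add: mtrace_def)
    finally show ?thesis using tr by simp
  qed
  show ?thesis using psd_entry_bound[OF psd assms(2,3)] diag_le[OF assms(2)] diag_le[OF assms(3)] by linarith
qed

lemma povm_entry_sum_bound:
  assumes "povm d M E" "i < d" "j < d"
  shows "(\<Sum>m<M. cmod (E m $$ (i,j))) \<le> 2"
proof -
  have "(\<Sum>m<M. cmod (E m $$ (i,j))) \<le> (\<Sum>m<M. Re (E m $$ (i,i)) + Re (E m $$ (j,j)))"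
    by (intro sum_mono psd_entry_bound) (use assms in \<open>auto simp: povm_def\<close>)
  also have "\<dots> = Re (\<Sum>m<M. E m $$ (i,i)) + Re (\<Sum>m<M. E m $$ (j,j))"
    by (simp add: sum.distrib)
  also have "\<dots> = 2" using assms unfolding povm_def by simp
  finally show ?thesis .
qed

lemma cmod_mtrace_mult_le:
  assumes A: "A \<in> carrier_mat d d" and B: "B \<in> carrier_mat d d"
    and bound: "\<And>i j. i < d \<Longrightarrow> j < d \<Longrightarrow> cmod (B $$ (i,j)) \<le> b"
  shows "cmod (mtrace d (A * B)) \<le> b * (\<Sum>i<d. \<Sum>j<d. cmod (A $$ (i,j)))"
proof -
  have "mtrace d (A * B) = (\<Sum>i<d. \<Sum>j<d. A $$ (i,j) * B $$ (j,i))"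
    unfolding mtrace_def using A B
    by (auto simp: scalar_prod_def lessThan_atLeast0 intro!: sum.cong)
  also have "cmod \<dots> \<le> (\<Sum>i<d. \<Sum>j<d. cmod (A $$ (i,j) * B $$ (j,i)))"
    by (rule order_trans[OF norm_sum sum_mono[OF norm_sum]])
  also have "\<dots> \<le> (\<Sum>i<d. \<Sum>j<d. b * cmod (A $$ (i,j)))"
    by (intro sum_mono) (simp add: norm_mult mult.commute[of b] mult_left_mono bound)
  finally show ?thesis by (simp add: sum_distrib_left)
qed

lemma povm_trace_sum_bound:
  assumes E: "povm d M E" and \<rho>: "\<And>m. m < M \<Longrightarrow> density_op d (\<rho> m)"
  shows "(\<Sum>m<M. cmod (mtrace d (E m * \<rho> m))) \<le> 4 * real d * real d"
proof -
  have "(\<Sum>m<M. cmod (mtrace d (E m * \<rho> m))) \<le> (\<Sum>m<M. 2 * (\<Sum>i<d. \<Sum>j<d. cmod (E m $$ (i,j))))"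
  proof (intro sum_mono cmod_mtrace_mult_le density_op_entry_bound)
    fix m assume "m \<in> {..<M}"
    then show "E m \<in> carrier_mat d d" "\<rho> m \<in> carrier_mat d d" "density_op d (\<rho> m)"
      using E \<rho> by (auto simp: povm_def density_op_def psd_def)
  qed
  also have "\<dots> = (\<Sum>i<d. \<Sum>j<d. 2 * (\<Sum>m<M. cmod (E m $$ (i,j))))"
    by (simp add: sum_distrib_left sum.swap[of _ "{..<M}"])
  also have "\<dots> \<le> (\<Sum>i<d. \<Sum>j<d. 2 * 2)"
    by (intro sum_mono mult_left_mono povm_entry_sum_bound[OF E]) auto
  finally show ?thesis by simp
qed

lemma classical_channel_le_one:
  assumes "classical_channel nx ny P" "x < nx" "y < ny"
  shows "P x y \<le> 1"
proof -
  have "P x y \<le> (\<Sum>y'<ny. P x y')"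
    by (rule member_le_sum) (use assms in \<open>auto simp: classical_channel_def\<close>)
  then show ?thesis using assms by (simp add: classical_channel_def)
qed

(* parallel_capacity is a GREATEST, so it needs some bound on code sizes; this crude one comes
   from the entrywise estimates above. *)
lemma zero_error_code_size_le:
  assumes P: "classical_channel nx ny P" and "zero_error_code nx ny P d M"
  shows "M \<le> 4 * ny * d * d"
proof -
  obtain x \<rho> E where x: "\<And>m. m < M \<Longrightarrow> x m < nx \<and> density_op d (\<rho> m)"
    and E: "\<And>y. y < ny \<Longrightarrow> povm d M (E y)"
    and decode: "\<And>m. m < M \<Longrightarrow> (\<Sum>y<ny. complex_of_real (P (x m) y) * mtrace d (E y m * \<rho> m)) = 1"
    using assms(2) unfolding zero_error_code_def by blast
  have success: "1 \<le> (\<Sum>y<ny. cmod (mtrace d (E y m * \<rho> m)))" if "m < M" for m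
  proof -
    have "1 = cmod (\<Sum>y<ny. complex_of_real (P (x m) y) * mtrace d (E y m * \<rho> m))"
      using decode[OF that] by simp
    also have "\<dots> \<le> (\<Sum>y<ny. cmod (complex_of_real (P (x m) y) * mtrace d (E y m * \<rho> m)))"
      by (rule norm_sum)
    also have "\<dots> \<le> (\<Sum>y<ny. cmod (mtrace d (E y m * \<rho> m)))"
    proof (rule sum_mono)
      fix y assume "y \<in> {..<ny}"
      then have "0 \<le> P (x m) y" "P (x m) y \<le> 1"
        using P x[OF that] classical_channel_le_one[OF P] by (auto simp: classical_channel_def)
      then show "cmod (complex_of_real (P (x m) y) * mtrace d (E y m * \<rho> m)) \<le> cmod (mtrace d (E y m * \<rho> m))"
        by (simp add: norm_mult mult_left_le_one_le)
    qed
    finally show ?thesis .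
  qed
  have "real M = (\<Sum>m<M. 1)" by simp
  also have "\<dots> \<le> (\<Sum>m<M. \<Sum>y<ny. cmod (mtrace d (E y m * \<rho> m)))"
    by (intro sum_mono success) simp
  also have "\<dots> = (\<Sum>y<ny. \<Sum>m<M. cmod (mtrace d (E y m * \<rho> m)))" by (rule sum.swap)
  also have "\<dots> \<le> (\<Sum>y<ny. 4 * real d * real d)"
    using povm_trace_sum_bound E x by (intro sum_mono) auto
  finally have "real M \<le> real (4 * ny * d * d)" by simp
  then show ?thesis by (simp only: of_nat_le_iff)
qed

lemma zero_error_code_le_parallel_capacity:
  assumes "classical_channel nx ny P" "zero_error_code nx ny P d M"
  shows "M \<le> parallel_capacity nx ny P d"
  unfolding parallel_capacity_def
  by (rule Greatest_le_nat[where b = "4 * ny * d * d"]) (use assms zero_error_code_size_le in auto)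

lemma independence_number_le:
  assumes "\<And>S. independent_set nx ny P S \<Longrightarrow> card S \<le> b"
  shows "independence_number nx ny P \<le> b"
proof -
  have "finite {S. independent_set nx ny P S}"
    by (rule finite_subset[of _ "Pow {..<nx}"]) (auto simp: independent_set_def)
  moreover have "{} \<in> {S. independent_set nx ny P S}" by (simp add: independent_set_def)
  ultimately show ?thesis unfolding independence_number_def using assms by (subst Max_le_iff) auto
qed

definition proj_mat :: "nat \<Rightarrow> (nat \<Rightarrow> real) \<Rightarrow> complex mat" where
  "proj_mat d u = mat d d (\<lambda>(i,j). complex_of_real (u i * u j / (\<Sum>k<d. (u k)\<^sup>2)))"

lemma proj_mat_carrier: "proj_mat d u \<in> carrier_mat d d"
  by (simp add: proj_mat_def)

lemma psd_proj_mat: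
  assumes "0 < (\<Sum>k<d. (u k)\<^sup>2)"
  shows "psd d (proj_mat d u)"
proof -
  define c where "c = (\<Sum>k<d. (u k)\<^sup>2)"
  have quad: "(\<Sum>i<d. cnj (v $ i) * (proj_mat d u *\<^sub>v v) $ i) = complex_of_real (cmod z ^ 2 / c)"
    if v: "v \<in> carrier_vec d" and z: "z = (\<Sum>j<d. complex_of_real (u j) * v $ j)" for v z
  proof -
    have "(proj_mat d u *\<^sub>v v) $ i = complex_of_real (u i / c) * z" if "i < d" for i
      using that v
      by (simp add: proj_mat_def c_def z scalar_prod_def sum_distrib_left lessThan_atLeast0
          sum_divide_distrib algebra_simps)
    then have "(\<Sum>i<d. cnj (v $ i) * (proj_mat d u *\<^sub>v v) $ i)
        = (\<Sum>i<d. cnj (v $ i) * complex_of_real (u i) * (z / complex_of_real c))"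
      by (intro sum.cong) (simp_all add: field_simps)
    also have "\<dots> = (\<Sum>i<d. cnj (v $ i) * complex_of_real (u i)) * z / complex_of_real c"
      by (simp add: sum_distrib_right sum_divide_distrib del: of_real_divide)
    also have "(\<Sum>i<d. cnj (v $ i) * complex_of_real (u i)) = cnj z"
      by (simp add: z mult.commute)
    finally show ?thesis
      by (simp add: complex_mult_cnj cmod_power2 mult.commute)
  qed
  show ?thesis
    unfolding psd_def Let_def using assms by (simp add: proj_mat_carrier quad c_def)
qed

lemma mtrace_proj_mat:
  assumes "0 < (\<Sum>k<d. (u k)\<^sup>2)"
  shows "mtrace d (proj_mat d u) = 1"
proof -
  have "mtrace d (proj_mat d u) = complex_of_real (\<Sum>i<d. (u i)\<^sup>2 / (\<Sum>k<d. (u k)\<^sup>2))"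
    by (simp add: mtrace_def proj_mat_def power2_eq_square)
  also have "\<dots> = 1" using assms by (simp add: sum_divide_distrib[symmetric])
  finally show ?thesis .
qed

lemma proj_mat_idem:
  assumes "0 < (\<Sum>k<d. (u k)\<^sup>2)"
  shows "proj_mat d u * proj_mat d u = proj_mat d u"
proof (rule eq_matI)
  define c where "c = (\<Sum>k<d. (u k)\<^sup>2)"
  fix i j assume ij: "i < dim_row (proj_mat d u)" "j < dim_col (proj_mat d u)"
  then have "(proj_mat d u * proj_mat d u) $$ (i,j)
      = (\<Sum>l<d. complex_of_real (u i * u l / c * (u l * u j / c)))"
    by (simp add: proj_mat_def c_def scalar_prod_def lessThan_atLeast0)
  also have "\<dots> = complex_of_real (\<Sum>l<d. u i * u j / c / c * (u l)\<^sup>2)"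
    unfolding of_real_sum
    by (intro sum.cong refl arg_cong[where f = complex_of_real]) (simp add: power2_eq_square)
  also have "\<dots> = complex_of_real (u i * u j / c / c * c)"
    by (simp add: c_def sum_distrib_left)
  also have "\<dots> = complex_of_real (u i * u j / c)"
    using assms by (simp add: c_def)
  finally show "(proj_mat d u * proj_mat d u) $$ (i,j) = proj_mat d u $$ (i,j)"
    using ij by (simp add: proj_mat_def c_def)
qed (simp_all add: proj_mat_def)

lemma density_op_proj_mat:
  "0 < (\<Sum>k<d. (u k)\<^sup>2) \<Longrightarrow> density_op d (proj_mat d u)"
  by (simp add: density_op_def psd_proj_mat mtrace_proj_mat)

definition context_channel :: "nat \<Rightarrow> (nat \<Rightarrow> nat set) \<Rightarrow> nat \<Rightarrow> nat \<Rightarrow> real" where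
  "context_channel r B x y = (if x \<in> B y then 1 / real r else 0)"

lemma context_channel_row_sum:
  assumes "0 < r" "card {y \<in> {..<k}. x \<in> B y} = r"
  shows "(\<Sum>y<k. context_channel r B x y) = 1"
proof -
  have "(\<Sum>y<k. context_channel r B x y) = (\<Sum>y<k. of_bool (x \<in> B y)) / real r"
    unfolding sum_divide_distrib by (intro sum.cong) (auto simp: context_channel_def)
  also have "\<dots> = 1"
    using assms by (simp add: Int_def conj_commute)
  finally show ?thesis .
qed

lemma classical_channel_context_channel:
  assumes "0 < n" "0 < k" "0 < r" "\<And>x. x < n \<Longrightarrow> card {y \<in> {..<k}. x \<in> B y} = r"
  shows "classical_channel n k (context_channel r B)"
  using assms context_channel_row_sum unfolding classical_channel_def
  by (auto simp: context_channel_def)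

lemma confusable_context_channel:
  "0 < r \<Longrightarrow> confusable k (context_channel r B) x x' \<longleftrightarrow> x \<noteq> x' \<and> (\<exists>y<k. x \<in> B y \<and> x' \<in> B y)"
  by (auto simp: confusable_def context_channel_def)

lemma independent_set_context_channel_card:
  assumes r: "0 < r" and deg: "\<And>x. x < n \<Longrightarrow> card {y \<in> {..<k}. x \<in> B y} = r"
    and S: "independent_set n k (context_channel r B) S"
  shows "r * card S \<le> k"
proof -
  have S_sub: "S \<subseteq> {..<n}" using S independent_set_def by blast
  then have fin: "finite S" using finite_subset by blast
  have at_most_one: "card (S \<inter> B y) \<le> 1" if "y < k" for y
  proof -
    have "a = b" if "a \<in> S \<inter> B y" "b \<in> S \<inter> B y" for a b
      using S that \<open>y < k\<close> r by (auto simp: independent_set_def confusable_context_channel)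
    then show ?thesis using card_le_Suc0_iff_eq[of "S \<inter> B y"] fin by auto
  qed
  have "r * card S = (\<Sum>x\<in>S. card {y \<in> {..<k}. x \<in> B y})"
    using deg S_sub by (simp add: subset_eq)
  also have "\<dots> = (\<Sum>x\<in>S. \<Sum>y<k. of_bool (x \<in> B y))"
    by (simp add: Int_def conj_commute)
  also have "\<dots> = (\<Sum>y<k. \<Sum>x\<in>S. of_bool (x \<in> B y))"
    by (rule sum.swap)
  also have "\<dots> = (\<Sum>y<k. card (S \<inter> B y))"
    using fin by simp
  also have "\<dots> \<le> (\<Sum>y<k. 1)" by (intro sum_mono at_most_one) simp
  finally show ?thesis by simp
qed

lemma independence_number_context_channel:
  assumes "0 < r" "\<And>x. x < n \<Longrightarrow> card {y \<in> {..<k}. x \<in> B y} = r"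
  shows "independence_number n k (context_channel r B) \<le> k div r"
proof (rule independence_number_le)
  fix S assume "independent_set n k (context_channel r B) S"
  then have "card S * r \<le> k"
    using independent_set_context_channel_card[OF assms] by (simp add: mult.commute)
  then show "card S \<le> k div r"
    using assms(1) by (simp add: less_eq_div_iff_mult_less_eq)
qed

lemma zero_error_code_context_channel:
  assumes r: "0 < r" and deg: "\<And>x. x < n \<Longrightarrow> card {y \<in> {..<k}. x \<in> B y} = r"
    and u: "\<And>m. m < n \<Longrightarrow> 0 < (\<Sum>i<d. (u m i)\<^sup>2)"
    and B: "\<And>y. y < k \<Longrightarrow> B y \<subseteq> {..<n}"
    and basis: "\<And>y i j. y < k \<Longrightarrow> i < d \<Longrightarrow> j < d \<Longrightarrow>
      (\<Sum>m\<in>B y. proj_mat d (u m) $$ (i,j)) = 1\<^sub>m d $$ (i,j)"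
  shows "zero_error_code n k (context_channel r B) d n"
proof -
  \<comment> \<open>Seeing context y, the receiver measures in the basis y.\<close>
  define E where "E y m = (if m \<in> B y then proj_mat d (u m) else 0\<^sub>m d d)" for y m
  have "povm d n (E y)" if "y < k" for y
  proof -
    have "psd d (E y m)" if "m < n" for m
      using u[OF that] by (simp add: E_def psd_proj_mat psd_zero_mat)
    moreover have "(\<Sum>m<n. E y m $$ (i,j)) = 1\<^sub>m d $$ (i,j)" if "i < d" "j < d" for i j
    proof -
      have "(\<Sum>m<n. E y m $$ (i,j)) = (\<Sum>m\<in>B y. proj_mat d (u m) $$ (i,j))"
        using B[OF \<open>y < k\<close>] that
        by (intro sum.mono_neutral_cong_right) (auto simp: E_def)
      then show ?thesis using basis \<open>y < k\<close> that by simp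
    qed
    ultimately show ?thesis by (simp add: povm_def)
  qed
  moreover have "(\<Sum>y<k. complex_of_real (context_channel r B m y) * mtrace d (E y m * proj_mat d (u m))) = 1"
    if "m < n" for m
  proof -
    have "(\<Sum>y<k. complex_of_real (context_channel r B m y) * mtrace d (E y m * proj_mat d (u m)))
        = complex_of_real (\<Sum>y<k. context_channel r B m y)"
      unfolding of_real_sum
      by (intro sum.cong) (simp_all add: E_def context_channel_def proj_mat_idem mtrace_proj_mat u that)
    then show ?thesis using context_channel_row_sum[OF r deg[OF that]] by simp
  qed
  ultimately show ?thesis
    unfolding zero_error_code_def using u density_op_proj_mat
    by (intro exI[of _ "\<lambda>m. m"] exI[of _ "\<lambda>m. proj_mat d (u m)"] exI[of _ E]) auto
qed

(* Cabello, Estebaranz and Garcia-Alcaine's 18-vector proof of the Kochen-Specker theorem in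
   R^4: 9 orthogonal bases, every vector in exactly two of them. *)
definition cabello_vectors :: "real list list" where
  "cabello_vectors =
    [[0,0,0,1], [0,0,1,0], [1,1,0,0], [1,-1,0,0], [0,1,0,0], [1,0,1,0],
     [1,0,-1,0], [1,-1,1,-1], [1,-1,-1,1], [0,0,1,1], [1,1,1,1], [0,1,0,-1],
     [1,0,0,1], [1,0,0,-1], [0,1,-1,0], [1,1,-1,1], [1,1,1,-1], [-1,1,1,1]]"

definition cabello_bases :: "nat list list" where
  "cabello_bases =
    [[0,1,2,3], [0,4,5,6], [7,8,2,9], [7,10,6,11], [1,4,12,13],
     [8,10,13,14], [15,16,3,9], [15,17,5,11], [16,17,12,14]]"

definition cabello_vec :: "nat \<Rightarrow> nat \<Rightarrow> real" where
  "cabello_vec m i = cabello_vectors ! m ! i"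

definition cabello_context :: "nat \<Rightarrow> nat set" where
  "cabello_context y = set (cabello_bases ! y)"

lemma cabello_vec_norm_pos: "\<forall>m<18. 0 < (\<Sum>k<4. (cabello_vec m k)\<^sup>2)"
  by code_simp

lemma cabello_context_subset: "\<forall>y<9. cabello_context y \<subseteq> {..<18}"
  by code_simp

lemma cabello_degree: "\<forall>x<18. card {y \<in> {..<9}. x \<in> cabello_context y} = 2"
  by code_simp

(* Phrased over lists, which code_simp evaluates far faster than the set-indexed sums. *)
lemma cabello_bases_resolution_list:
  "\<forall>y\<in>set [0..<9]. distinct (cabello_bases ! y) \<and> (\<forall>i\<in>set [0..<4]. \<forall>j\<in>set [0..<4].
     (\<Sum>m\<leftarrow>cabello_bases ! y. cabello_vec m i * cabello_vec m j / (\<Sum>k<4. (cabello_vec m k)\<^sup>2))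
       = of_bool (i = j))"
  by code_simp

lemma cabello_resolution_of_identity:
  assumes "y < 9" "i < 4" "j < 4"
  shows "(\<Sum>m\<in>cabello_context y. proj_mat 4 (cabello_vec m) $$ (i,j)) = 1\<^sub>m 4 $$ (i,j)"
proof -
  define f where "f m = cabello_vec m i * cabello_vec m j / (\<Sum>k<4. (cabello_vec m k)\<^sup>2)" for m
  have distinct: "distinct (cabello_bases ! y)" and sum_f: "(\<Sum>m\<leftarrow>cabello_bases ! y. f m) = of_bool (i = j)"
    using cabello_bases_resolution_list assms by (simp_all add: f_def)
  have "(\<Sum>m\<in>cabello_context y. proj_mat 4 (cabello_vec m) $$ (i,j))
      = (\<Sum>m\<in>cabello_context y. complex_of_real (f m))"
    using assms by (intro sum.cong) (simp_all add: proj_mat_def f_def)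
  also have "\<dots> = complex_of_real (of_bool (i = j))"
    by (simp only: cabello_context_def of_real_sum[symmetric] sum.distinct_set_conv_list[OF distinct] sum_f)
  finally show ?thesis using assms by simp
qed

lemma cabello_noisy: "noisy_channel 18 9 (context_channel 2 cabello_context)"
proof -
  have "confusable 9 (context_channel 2 cabello_context) 0 1"
    by (auto simp: confusable_context_channel cabello_context_def cabello_bases_def
        intro!: exI[of _ "0::nat"])
  then show ?thesis
    unfolding noisy_channel_def by (intro exI[of _ "0::nat"] exI[of _ "1::nat"] conjI) simp_all
qed

theorem theorem1:
  shows "\<exists>(nx::nat) (ny::nat) (P :: nat \<Rightarrow> nat \<Rightarrow> real) (d::nat).
           classical_channel nx ny P \<and> noisy_channel nx ny P \<and> 1 \<le> d \<and>
           parallel_capacity nx ny P d > independence_number nx ny P * d"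
proof (intro exI conjI)
  let ?P = "context_channel 2 cabello_context"
  show channel: "classical_channel 18 9 ?P"
    using cabello_degree by (intro classical_channel_context_channel) simp_all
  show "noisy_channel 18 9 ?P" by (rule cabello_noisy)
  have "independence_number 18 9 ?P \<le> 4"
    using independence_number_context_channel[of 2 18 9 cabello_context] cabello_degree by simp
  moreover have "zero_error_code 18 9 ?P 4 18"
    using cabello_vec_norm_pos cabello_context_subset cabello_degree cabello_resolution_of_identity
    by (intro zero_error_code_context_channel) auto
  then have "18 \<le> parallel_capacity 18 9 ?P 4"
    by (rule zero_error_code_le_parallel_capacity[OF channel])
  ultimately show "independence_number 18 9 ?P * 4 < parallel_capacity 18 9 ?P 4" by simp
qed simp

end
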